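(* Let $(C,d)$ be a finitely generated chain complex with two filtrations given by filtration degree functions $p$ and $p'$ such that for every $x\in C$ the difference $p'(x)-p(x)$ is either $0$ or $1$. If the $p'$-spectral sequence collapses on page $l$, then the $p$-spectral sequence collapses on page $l+1$; i.e. the $p$-spectral sequence collapses at most one page after the $p'$-spectral sequence does.
   Context: A filtration on $C$ is a function $p:C\to\mathbb{Z}\cup\{-\infty\}$ with $p(x-y)\le\max(p(x),p(y))$ and $p(dx)\le p(x)$; write $C^k=\{x:p(x)\le k\}$. Define $Z^k_r=\{x\in C^k: dx\in C^{k-r}\}$, $B^k_r=\{dy\in C^k: y\in C^{k+r}\}$, and the pages $E^k_r=Z^k_r/(Z^{k-1}_{r-1}+B^k_{r-1})$ with differential $d_r[x]=[dx]:E^k_r\to E^{k-r}_r$. The spectral sequence collapses on page $l$ if $d_r=0$ for all $r\ge l$. *)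

theory Defs
  imports "HOL-Library.Extended_Real"
begin

definition is_filtration :: "('c::ab_group_add \<Rightarrow> 'c) \<Rightarrow> ('c \<Rightarrow> ereal) \<Rightarrow> bool" where
  "is_filtration d p \<longleftrightarrow>
     (\<forall>x. p x = -\<infinity> \<or> (\<exists>n::int. p x = ereal (of_int n))) \<and>
     (\<forall>x y. p (x - y) \<le> max (p x) (p y)) \<and>
     (\<forall>x. p (d x) \<le> p x)"

definition filt :: "('c \<Rightarrow> ereal) \<Rightarrow> int \<Rightarrow> 'c set" where
  "filt p k = {x. p x \<le> ereal (of_int k)}"

definition Zset :: "('c \<Rightarrow> ereal) \<Rightarrow> ('c \<Rightarrow> 'c) \<Rightarrow> int \<Rightarrow> int \<Rightarrow> 'c set" where
  "Zset p d k r = {x \<in> filt p k. d x \<in> filt p (k - r)}"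

definition Bset :: "('c \<Rightarrow> ereal) \<Rightarrow> ('c \<Rightarrow> 'c) \<Rightarrow> int \<Rightarrow> int \<Rightarrow> 'c set" where
  "Bset p d k r = {d y | y. y \<in> filt p (k + r) \<and> d y \<in> filt p k}"

text \<open>The subgroup Z^(k-1)_(r-1) + B^k_(r-1) by which Z^k_r is divided to form E^k_r.\<close>
definition Eden :: "('c::ab_group_add \<Rightarrow> ereal) \<Rightarrow> ('c \<Rightarrow> 'c) \<Rightarrow> int \<Rightarrow> int \<Rightarrow> 'c set" where
  "Eden p d k r = {a + b | a b. a \<in> Zset p d (k - 1) (r - 1) \<and> b \<in> Bset p d k (r - 1)}"

text \<open>d_r : E^k_r -> E^(k-r)_r, [x] |-> [dx], is the zero map: for every x in Z^k_r,
  the class of dx in E^(k-r)_r = Z^(k-r)_r / Eden (k-r) r vanishes.\<close>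
definition dr_zero :: "('c::ab_group_add \<Rightarrow> ereal) \<Rightarrow> ('c \<Rightarrow> 'c) \<Rightarrow> int \<Rightarrow> int \<Rightarrow> bool" where
  "dr_zero p d r k \<longleftrightarrow> (\<forall>x \<in> Zset p d k r. d x \<in> Eden p d (k - r) r)"

definition collapses_on :: "('c::ab_group_add \<Rightarrow> ereal) \<Rightarrow> ('c \<Rightarrow> 'c) \<Rightarrow> nat \<Rightarrow> bool" where
  "collapses_on p d l \<longleftrightarrow> (\<forall>r::nat. r \<ge> l \<longrightarrow> (\<forall>k. dr_zero p d (int r) k))"

end

theory Submission
  imports Defs
begin

text \<open>Since \<open>p \<le> p' \<le> p + 1\<close>, the filtrations interleave:
  \<open>C'^k \<subseteq> C^k \<subseteq> C'^(k+1)\<close>. Without quotients, \<open>d\<^sub>r = 0\<close> on \<open>E^k_r\<close> says that every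
  boundary \<open>z \<in> d(C^k) \<inter> C^(k-r)\<close> splits as a boundary of \<open>C^(k-1)\<close> lying in \<open>C^(k-r)\<close>
  plus a boundary of \<open>C^k\<close> lying in \<open>C^(k-r-1)\<close>. A boundary in \<open>d(C^k) \<inter> C^(k-r)\<close> lies in
  \<open>d(C'^(k+1)) \<inter> C'^(k-r+1)\<close>; splitting it there, and splitting the two pieces once more,
  uses \<open>d'\<^sub>s = 0\<close> only for \<open>s \<ge> r - 1\<close>, and the resulting pieces regroup into a splitting in \<open>C\<close>.
  This is why one page is lost.\<close>

definition boundaries :: "('c \<Rightarrow> 'c) \<Rightarrow> (int \<Rightarrow> 'c set) \<Rightarrow> int \<Rightarrow> int \<Rightarrow> 'c set" where
  "boundaries d F k j = d ` F k \<inter> F j"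

definition splits :: "('c::plus \<Rightarrow> 'c) \<Rightarrow> (int \<Rightarrow> 'c set) \<Rightarrow> int \<Rightarrow> int \<Rightarrow> bool" where
  "splits d F k j \<longleftrightarrow> (\<forall>z \<in> boundaries d F k j.
     \<exists>z1 \<in> boundaries d F (k - 1) j. \<exists>z2 \<in> boundaries d F k (j - 1). z = z1 + z2)"

lemma boundariesI: "y \<in> F k \<Longrightarrow> z = d y \<Longrightarrow> z \<in> F j \<Longrightarrow> z \<in> boundaries d F k j"
  unfolding boundaries_def by blast

lemma boundariesE:
  assumes "z \<in> boundaries d F k j"
  obtains y where "y \<in> F k" "z = d y" "z \<in> F j"
  using assms unfolding boundaries_def by blast

lemma splitsE:
  assumes "splits d F k j" "z \<in> boundaries d F k j"
  obtains z1 z2 where "z = z1 + z2" "z1 \<in> boundaries d F (k - 1) j" "z2 \<in> boundaries d F k (j - 1)"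
  using assms unfolding splits_def by blast

locale filtered_differential =
  fixes d :: "'c::ab_group_add \<Rightarrow> 'c" and F :: "int \<Rightarrow> 'c set"
  assumes d_diff: "d (a - b) = d a - d b"
    and zero_mem: "0 \<in> F k"
    and diff_mem: "a \<in> F k \<Longrightarrow> b \<in> F k \<Longrightarrow> a - b \<in> F k"
begin

lemma add_mem: "a \<in> F k \<Longrightarrow> b \<in> F k \<Longrightarrow> a + b \<in> F k"
  using diff_mem[of a k "0 - b"] diff_mem[OF zero_mem] by simp

lemma d_add: "d (a + b) = d a + d b"
  using d_diff[of a "0 - b"] d_diff[of 0 b] d_diff[of 0 0] by simp

lemma boundaries_add:
  "a \<in> boundaries d F k j \<Longrightarrow> b \<in> boundaries d F k j \<Longrightarrow> a + b \<in> boundaries d F k j"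
  by (elim boundariesE, intro boundariesI[of "_ + _"]) (auto simp: add_mem d_add)

lemma d_image_diff: "a \<in> d ` F k \<Longrightarrow> b \<in> d ` F k \<Longrightarrow> a - b \<in> d ` F k"
  by (auto simp: d_diff[symmetric] intro: diff_mem)

end

locale interleaved_filtrations =
  F: filtered_differential d F + G: filtered_differential d G for d F G +
  assumes G_subset_F: "G k \<subseteq> F k"
    and F_subset_G: "F k \<subseteq> G (k + 1)"
begin

lemma boundaries_G_subset_F: "boundaries d G k j \<subseteq> boundaries d F k j"
  using G_subset_F unfolding boundaries_def by blast

lemma boundaries_F_subset_G: "boundaries d F k j \<subseteq> boundaries d G (k + 1) (j + 1)"
  using F_subset_G unfolding boundaries_def by blast

lemma splits_from_shifted:
  assumes G_splits: "\<And>a b. a - b \<ge> l \<Longrightarrow> splits d G a b"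
    and gap: "k - j \<ge> l + 1"
  shows "splits d F k j"
  unfolding splits_def
proof
  fix z assume z: "z \<in> boundaries d F k j"
  then have "z \<in> boundaries d G (k + 1) (j + 1)"
    using boundaries_F_subset_G by blast
  then obtain u v where zuv: "z = u + v"
    and u: "u \<in> boundaries d G k (j + 1)" and v: "v \<in> boundaries d G (k + 1) j"
    using G_splits[of "k + 1" "j + 1"] gap by (auto elim: splitsE)
  have u_Fj: "u \<in> F j"
  proof -
    have "z \<in> F j" "v \<in> F j" using z v G_subset_F by (auto elim: boundariesE)
    then show ?thesis using F.diff_mem[of z j v] zuv by simp
  qed
  have v_dFk: "v \<in> d ` F k"
  proof -
    have "z \<in> d ` F k" "u \<in> d ` F k"
      using z u G_subset_F by (auto elim!: boundariesE)
    then show ?thesis using F.d_image_diff[of z k u] zuv by simp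
  qed
  txt \<open>Splitting \<open>u\<close> and \<open>v\<close> again, \<open>u1\<close> and \<open>v2\<close> inherit the missing drop in level from
    \<open>u \<in> F j\<close> and \<open>v \<in> d ` F k\<close>; only \<open>u2 + v1\<close> must be split a third time.\<close>
  obtain u1 u2 where uu: "u = u1 + u2"
    and u1: "u1 \<in> boundaries d G (k - 1) (j + 1)" and u2: "u2 \<in> boundaries d G k j"
    using G_splits[of k "j + 1"] gap u by (auto elim: splitsE)
  obtain v1 v2 where vv: "v = v1 + v2"
    and v1: "v1 \<in> boundaries d G k j" and v2: "v2 \<in> boundaries d G (k + 1) (j - 1)"
    using G_splits[of "k + 1" j] gap v by (auto elim: splitsE)
  have u1_F: "u1 \<in> boundaries d F (k - 1) j"
  proof -
    have "u2 \<in> F j" using u2 G_subset_F by (auto elim: boundariesE)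
    then have "u1 \<in> F j" using F.diff_mem[OF u_Fj] uu by fastforce
    with u1 G_subset_F show ?thesis by (auto elim!: boundariesE intro: boundariesI)
  qed
  have v2_F: "v2 \<in> boundaries d F k (j - 1)"
  proof -
    have "v1 \<in> d ` F k" using v1 G_subset_F by (auto elim!: boundariesE)
    then have "v2 \<in> d ` F k" using F.d_image_diff[OF v_dFk] vv by fastforce
    with v2 G_subset_F show ?thesis by (auto elim!: boundariesE intro: boundariesI)
  qed
  obtain w1 w2 where ww: "u2 + v1 = w1 + w2"
    and w1: "w1 \<in> boundaries d G (k - 1) j" and w2: "w2 \<in> boundaries d G k (j - 1)"
    using G_splits[of k j] gap G.boundaries_add[OF u2 v1] by (auto elim: splitsE)
  have "z = (u1 + w1) + (w2 + v2)"
    using zuv uu vv ww by (simp add: algebra_simps)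
  moreover have "u1 + w1 \<in> boundaries d F (k - 1) j"
    using F.boundaries_add[OF u1_F] w1 boundaries_G_subset_F by blast
  moreover have "w2 + v2 \<in> boundaries d F k (j - 1)"
    using F.boundaries_add[OF _ v2_F] w2 boundaries_G_subset_F by blast
  ultimately show "\<exists>z1 \<in> boundaries d F (k - 1) j. \<exists>z2 \<in> boundaries d F k (j - 1). z = z1 + z2"
    by blast
qed

end

lemma filtration_diff_mem:
  "is_filtration d p \<Longrightarrow> a \<in> filt p k \<Longrightarrow> b \<in> filt p k \<Longrightarrow> a - b \<in> filt p k"
  unfolding is_filtration_def filt_def by (fastforce intro: order_trans)

lemma filt_mono: "k \<le> k' \<Longrightarrow> filt p k \<subseteq> filt p k'"
  unfolding filt_def by (auto intro: order_trans)

lemma filtration_zero_le: "is_filtration d p \<Longrightarrow> p 0 \<le> p x"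
  unfolding is_filtration_def using diff_self[of x] max.idem[of "p x"] by metis

lemma dr_zero_imp_splits:
  assumes filtration: "is_filtration d p"
    and d_diff: "\<And>a b. d (a - b) = d a - d b"
    and dr: "dr_zero p d r k"
  shows "splits d (filt p) k (k - r)"
  unfolding splits_def
proof
  fix z assume "z \<in> boundaries d (filt p) k (k - r)"
  then obtain x where x: "x \<in> filt p k" "z = d x" "z \<in> filt p (k - r)"
    by (elim boundariesE)
  then have "d x \<in> Eden p d (k - r) r"
    using dr unfolding dr_zero_def Zset_def by blast
  then obtain a y where dx: "d x = a + d y" and a: "a \<in> filt p (k - r - 1)"
    and y: "y \<in> filt p (k - 1)" "d y \<in> filt p (k - r)"
    unfolding Eden_def Zset_def Bset_def by auto
  have "x - y \<in> filt p k"
    using filtration_diff_mem[OF filtration x(1)] y(1) filt_mono[of "k - 1" k p] by auto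
  moreover have "a = d (x - y)"
    using dx d_diff by simp
  ultimately have "a \<in> boundaries d (filt p) k (k - r - 1)"
    using a by (auto intro: boundariesI)
  moreover have "d y \<in> boundaries d (filt p) (k - 1) (k - r)"
    using y by (auto intro: boundariesI)
  moreover have "z = d y + a"
    using x(2) dx by (simp add: add.commute)
  ultimately show "\<exists>z1 \<in> boundaries d (filt p) (k - 1) (k - r).
      \<exists>z2 \<in> boundaries d (filt p) k (k - r - 1). z = z1 + z2"
    by blast
qed

lemma splits_imp_dr_zero:
  assumes dd: "\<And>x. d (d x) = 0" and p0: "p 0 = -\<infinity>"
    and split: "splits d (filt p) k (k - r)"
  shows "dr_zero p d r k"
  unfolding dr_zero_def
proof
  fix x assume "x \<in> Zset p d k r"
  then have "d x \<in> boundaries d (filt p) k (k - r)"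
    unfolding Zset_def by (auto intro: boundariesI)
  then obtain z1 z2 where dx: "d x = z1 + z2"
    and z1: "z1 \<in> boundaries d (filt p) (k - 1) (k - r)"
    and z2: "z2 \<in> boundaries d (filt p) k (k - r - 1)"
    using split by (elim splitsE)
  have "z1 \<in> Bset p d (k - r) (r - 1)"
    using z1 unfolding Bset_def by (auto elim!: boundariesE)
  moreover have "z2 \<in> Zset p d (k - r - 1) (r - 1)"
    using z2 dd p0 unfolding Zset_def filt_def by (auto elim!: boundariesE)
  moreover have "d x = z2 + z1"
    using dx by (simp add: add.commute)
  ultimately show "d x \<in> Eden p d (k - r) r"
    unfolding Eden_def by blast
qed

text \<open>A collapsing spectral sequence forces \<open>p 0 = -\<infinity>\<close>: if \<open>p 0 = m\<close> were finite, every
  element would have degree \<open>\<ge> m\<close>, yet \<open>d\<^sub>r[0] = 0\<close> in \<open>E^m_r\<close> produces an element of degree \<open>\<le> m - 1\<close>.\<close>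
lemma collapsing_filtration_zero:
  assumes filtration: "is_filtration d p" and d0: "d 0 = 0" and collapse: "collapses_on p d l"
  shows "p 0 = -\<infinity>"
proof (rule ccontr)
  assume "p 0 \<noteq> -\<infinity>"
  then obtain m :: int where m: "p 0 = ereal (of_int m)"
    using filtration unfolding is_filtration_def by blast
  have "dr_zero p d (int l) (m + int l)"
    using collapse unfolding collapses_on_def by blast
  moreover have "0 \<in> Zset p d (m + int l) (int l)"
    unfolding Zset_def filt_def using m d0 by simp
  ultimately have "d 0 \<in> Eden p d m (int l)"
    unfolding dr_zero_def by force
  then obtain a where "a \<in> filt p (m - 1)"
    unfolding Eden_def Zset_def by blast
  then have "p 0 \<le> ereal (of_int (m - 1))"
    using filtration_zero_le[OF filtration, of a] unfolding filt_def by (auto intro: order_trans)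
  then show False using m by simp
qed

lemma filtered_differential_filt:
  assumes "is_filtration d p" "p 0 = -\<infinity>" "\<And>a b. d (a - b) = d a - d b"
  shows "filtered_differential d (filt p)"
  using assms filtration_diff_mem by unfold_locales (auto simp: filt_def)

lemma interleaved_filt:
  assumes "\<forall>x. p' x = p x \<or> p' x = p x + 1"
  shows "filt p' k \<subseteq> filt p k" "filt p k \<subseteq> filt p' (k + 1)"
proof -
  have "p x \<le> p' x" for x
    using assms[rule_format, of x] by (cases "p x") auto
  then show "filt p' k \<subseteq> filt p k"
    unfolding filt_def by (auto intro: order_trans)
  have "p' x \<le> ereal (of_int (k + 1))" if "p x \<le> ereal (of_int k)" for x
  proof -
    have "p' x \<le> p x + 1"
      using assms[rule_format, of x] by (cases "p x") auto
    also have "\<dots> \<le> ereal (of_int k) + 1"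
      using that by (rule add_right_mono)
    finally show ?thesis by simp
  qed
  then show "filt p k \<subseteq> filt p' (k + 1)"
    unfolding filt_def by blast
qed

theorem proposition4p1:
  fixes scale :: "'r::comm_ring_1 \<Rightarrow> 'c::ab_group_add \<Rightarrow> 'c"
    and d :: "'c \<Rightarrow> 'c"
    and p p' :: "'c \<Rightarrow> ereal"
    and l :: nat
  assumes "module scale"
    and "module_hom scale scale d"
    and "\<forall>x. d (d x) = 0"
    and "\<exists>S. finite S \<and> module.span scale S = UNIV"
    and "is_filtration d p"
    and "is_filtration d p'"
    and "\<forall>x. p' x = p x \<or> p' x = p x + 1"
    and "collapses_on p' d l"
  shows "collapses_on p d (Suc l)"
proof -
  have d_diff: "d (a - b) = d a - d b" for a b
    using module_hom.diff[OF assms(2)] .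
  have p'0: "p' 0 = -\<infinity>"
    using collapsing_filtration_zero[OF assms(6) module_hom.zero[OF assms(2)] assms(8)] .
  then have p0: "p 0 = -\<infinity>"
    using assms(7)[rule_format, of 0] by (cases "p 0") auto
  interpret interleaved_filtrations d "filt p" "filt p'"
    using filtered_differential_filt[OF assms(5) p0 d_diff]
      filtered_differential_filt[OF assms(6) p'0 d_diff] interleaved_filt[OF assms(7)]
    by (simp add: interleaved_filtrations_def interleaved_filtrations_axioms_def)
  have p'_splits: "splits d (filt p') a b" if "a - b \<ge> int l" for a b
  proof -
    have "l \<le> nat (a - b)" "int (nat (a - b)) = a - b"
      using that by auto
    then have "dr_zero p' d (int (nat (a - b))) a"
      using assms(8) unfolding collapses_on_def by blast
    then show ?thesis
      using dr_zero_imp_splits[OF assms(6) d_diff] that by fastforce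
  qed
  show ?thesis
    unfolding collapses_on_def
  proof (intro allI impI)
    fix r :: nat and k assume "Suc l \<le> r"
    then have "splits d (filt p) k (k - int r)"
      using splits_from_shifted[OF p'_splits] by simp
    then show "dr_zero p d (int r) k"
      using splits_imp_dr_zero[of d p] assms(3) p0 by blast
  qed
qed

end
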